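(* Let $\mathcal{P}=(|K|,V)$ be a polyhedral model with cell poset model $\mathbb{F}(\mathcal{P})=(\tilde K,\preceq,\mathcal{V})$. For every $\downarrow$-path $\pi:[0;\ell]\to\tilde K$ there is a topological path $\pi':[0,1]\to|K|$ such that (i) $\mathbb{F}(\pi'(0))=\pi(0)$, (ii) $\mathbb{F}(\pi'(1))=\pi(\ell)$, and (iii) for every $r\in(0,1)$ there is $i<\ell$ with $\mathbb{F}(\pi'(r))=\pi(i)$.
   Context: Fix a set PL of proposition letters. A simplex $\sigma\subseteq\mathbb{R}^m$ is the convex hull of $d+1$ affinely independent points $v_0,\dots,v_d$; its faces are the simplices spanned by nonempty subsets of its vertices. Its relative interior (cell) is $\tilde\sigma=\{\sum_i\lambda_iv_i:\lambda_i\in(0,1],\sum_i\lambda_i=1\}$. A simplicial complex $K$ is a finite set of simplices in $\mathbb{R}^m$ closed under faces, any two of which intersect in a common face or in $\emptyset$. Its set of cells $\tilde K=\{\tilde\sigma:\sigma\in K\}$ is partially ordered by $\tilde\sigma_1\preceq\tilde\sigma_2$ iff $\tilde\sigma_1$ is contained in the topological closure of $\tilde\sigma_2$ (equivalently, $\sigma_1$ is a face of $\sigma_2$). The polyhedron $|K|$ is the union of the simplices of $K$ with the subspace topology; its cells partition $|K|$. A polyhedral model is $\mathcal{P}=(|K|,V)$ with $V:\mathrm{PL}\to\mathcal{P}(|K|)$ such that each $V(p)$ is a union of cells. Its cell poset model is $\mathbb{F}(\mathcal{P})=(\tilde K,\preceq,\mathcal{V})$ with $\tilde\sigma\in\mathcal{V}(p)$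 iff $\tilde\sigma\subseteq V(p)$; for $x\in|K|$, $\mathbb{F}(x)$ is the unique cell containing $x$. A topological path is a continuous map $[0,1]\to|K|$. In a poset $(W,\preceq)$, a $\downarrow$-path of length $\ell\ge1$ is $\pi:\{0,\dots,\ell\}\to W$ with $\pi(i),\pi(i+1)$ comparable under $\preceq$ for each $i<\ell$, and $\pi(\ell)\preceq\pi(\ell-1)$. *)

theory Defs
  imports "HOL-Analysis.Analysis"
begin

text \<open>A simplex is represented by its (finite, nonempty, affinely independent) vertex set S;
  the simplex itself is convex hull S, its faces are convex hulls of nonempty subsets of S.\<close>

definition simplex_vertices :: "'a::euclidean_space set \<Rightarrow> bool" where
  "simplex_vertices S \<longleftrightarrow> finite S \<and> S \<noteq> {} \<and> \<not> affine_dependent S"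

definition cell :: "'a::euclidean_space set \<Rightarrow> 'a set" where
  "cell S = {(\<Sum>v\<in>S. l v *\<^sub>R v) | l. (\<forall>v\<in>S. 0 < l v \<and> l v \<le> 1) \<and> sum l S = 1}"

text \<open>A simplicial complex, given as the finite set of vertex sets of its simplices.\<close>
definition simplicial_complex :: "'a::euclidean_space set set \<Rightarrow> bool" where
  "simplicial_complex K \<longleftrightarrow>
     finite K \<and>
     (\<forall>S\<in>K. simplex_vertices S) \<and>
     (\<forall>S\<in>K. \<forall>T. T \<subseteq> S \<and> T \<noteq> {} \<longrightarrow> T \<in> K) \<and>
     (\<forall>S\<in>K. \<forall>T\<in>K. convex hull S \<inter> convex hull T = {} \<or>
        (\<exists>U. U \<noteq> {} \<and> U \<subseteq> S \<and> U \<subseteq> T \<and> convex hull S \<inter> convex hull T = convex hull U))"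

definition polyhedron :: "'a::euclidean_space set set \<Rightarrow> 'a set" where
  "polyhedron K = (\<Union>S\<in>K. convex hull S)"

definition cells :: "'a::euclidean_space set set \<Rightarrow> 'a set set" where
  "cells K = cell ` K"

definition cell_le :: "'a::euclidean_space set \<Rightarrow> 'a set \<Rightarrow> bool" where
  "cell_le c1 c2 \<longleftrightarrow> c1 \<subseteq> closure c2"

definition polyhedral_model :: "'a::euclidean_space set set \<Rightarrow> ('p \<Rightarrow> 'a set) \<Rightarrow> bool" where
  "polyhedral_model K V \<longleftrightarrow> simplicial_complex K \<and>
     (\<forall>p. \<exists>C. C \<subseteq> cells K \<and> V p = \<Union>C)"

definition cell_val :: "'a::euclidean_space set set \<Rightarrow> ('p \<Rightarrow> 'a set) \<Rightarrow> 'p \<Rightarrow> 'a set set" where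
  "cell_val K V p = {c \<in> cells K. c \<subseteq> V p}"

definition cell_of :: "'a::euclidean_space set set \<Rightarrow> 'a \<Rightarrow> 'a set" where
  "cell_of K x = (THE c. c \<in> cells K \<and> x \<in> c)"

definition down_path :: "'a::euclidean_space set set \<Rightarrow> (nat \<Rightarrow> 'a set) \<Rightarrow> nat \<Rightarrow> bool" where
  "down_path K \<pi> l \<longleftrightarrow> 1 \<le> l \<and>
     (\<forall>i\<le>l. \<pi> i \<in> cells K) \<and>
     (\<forall>i<l. cell_le (\<pi> i) (\<pi> (Suc i)) \<or> cell_le (\<pi> (Suc i)) (\<pi> i)) \<and>
     cell_le (\<pi> l) (\<pi> (l - 1))"

end

theory Submission imports Defs begin

text \<open>Choose a point in each cell of the down-path and join consecutive points by straight
  segments. If one cell lies in the closure of the next, every point of the segment other than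
  its first endpoint lies in the larger cell, since its barycentric coordinates there are all
  positive. So each interior point of the polygonal path lies in \<open>\<pi> j\<close> or \<open>\<pi> (j+1)\<close>, and the
  final condition \<open>\<pi> l \<preceq> \<pi> (l-1)\<close> keeps the last segment inside \<open>\<pi> (l-1)\<close>. The cell containing
  a point is unique because two simplices of a complex meet in a common face.\<close>

lemma affine_independent_barycentric_unique:
  fixes S :: "'a::real_vector set"
  assumes "finite S" "\<not> affine_dependent S" "sum a S = 1" "sum b S = 1"
    and "(\<Sum>v\<in>S. a v *\<^sub>R v) = (\<Sum>v\<in>S. b v *\<^sub>R v)" "v \<in> S"
  shows "a v = b v"
proof -
  have "sum (\<lambda>v. a v - b v) S = 0" using assms by (simp add: sum_subtractf)
  moreover have "(\<Sum>v\<in>S. (a v - b v) *\<^sub>R v) = 0"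
    using assms(5) by (simp add: scaleR_diff_left sum_subtractf)
  ultimately show ?thesis
    using assms(1,2,6) affine_dependent_explicit_finite by fastforce
qed

lemma cell_subset_convex_hull: "finite S \<Longrightarrow> cell S \<subseteq> convex hull S"
  by (auto simp: cell_def convex_hull_finite intro: less_imp_le)

lemma closure_cell_subset_convex_hull: "finite S \<Longrightarrow> closure (cell S) \<subseteq> convex hull S"
  by (intro closure_minimal cell_subset_convex_hull)
     (simp_all add: compact_imp_closed finite_imp_compact_convex_hull)

lemma cell_nonempty:
  assumes "finite S" "S \<noteq> {}"
  shows "cell S \<noteq> {}"
proof -
  have "card S > 0" using assms by (simp add: card_gt_0_iff)
  hence "(\<Sum>v\<in>S. (1 / real (card S)) *\<^sub>R v) \<in> cell S"
    unfolding cell_def by (intro CollectI exI[of _ "\<lambda>_. 1 / real (card S)"]) auto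
  thus ?thesis by blast
qed

lemma cell_meets_convex_hull_imp_subset:
  fixes S :: "'a::euclidean_space set"
  assumes "finite S" "\<not> affine_dependent S" "x \<in> cell S" "U \<subseteq> S" "x \<in> convex hull U"
  shows "S \<subseteq> U"
proof
  fix w assume w: "w \<in> S"
  from assms(3) obtain l where l: "\<forall>v\<in>S. 0 < l v" "sum l S = 1" "x = (\<Sum>v\<in>S. l v *\<^sub>R v)"
    unfolding cell_def by blast
  have "finite U" using assms(1,4) finite_subset by blast
  with assms(5) obtain m where m: "sum m U = 1" "(\<Sum>v\<in>U. m v *\<^sub>R v) = x"
    by (auto simp: convex_hull_finite)
  define m' where "m' v = (if v \<in> U then m v else 0)" for v
  have "sum m' S = sum m U"
    using assms(1,4) by (intro sum.mono_neutral_cong_right) (auto simp: m'_def)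
  moreover have "(\<Sum>v\<in>S. m' v *\<^sub>R v) = (\<Sum>v\<in>U. m v *\<^sub>R v)"
    using assms(1,4) by (intro sum.mono_neutral_cong_right) (auto simp: m'_def)
  ultimately have "l w = m' w"
    using affine_independent_barycentric_unique[OF assms(1,2) l(2) _ _ w] l(3) m by simp
  thus "w \<in> U" using l(1) w by (auto simp: m'_def split: if_splits)
qed

lemma linepath_convex_hull_to_cell:
  fixes B :: "'a::euclidean_space set"
  assumes "finite B" "a \<in> convex hull B" "b \<in> cell B" "s \<in> {0<..1}"
  shows "linepath a b s \<in> cell B"
proof -
  obtain m where m: "\<forall>v\<in>B. 0 \<le> m v" "sum m B = 1" "(\<Sum>v\<in>B. m v *\<^sub>R v) = a"
    using assms(1,2) by (auto simp: convex_hull_finite)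
  obtain l where l: "\<forall>v\<in>B. 0 < l v" "sum l B = 1" "b = (\<Sum>v\<in>B. l v *\<^sub>R v)"
    using assms(3) unfolding cell_def by blast
  define c where "c v = (1 - s) * m v + s * l v" for v
  have sum_c: "sum c B = 1"
    using m(2) l(2) by (simp add: c_def sum.distrib flip: sum_distrib_left)
  have pos: "\<forall>v\<in>B. 0 < c v"
    using m(1) l(1) assms(4) by (auto simp: c_def intro!: add_nonneg_pos)
  have "\<forall>v\<in>B. c v \<le> 1"
  proof
    fix v assume "v \<in> B"
    hence "c v \<le> sum c B" using pos assms(1) by (intro member_le_sum) auto
    thus "c v \<le> 1" using sum_c by simp
  qed
  moreover have "linepath a b s = (\<Sum>v\<in>B. c v *\<^sub>R v)"
    unfolding linepath_def c_def m(3)[symmetric] l(3)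
    by (simp add: scaleR_sum_right sum.distrib scaleR_add_left)
  ultimately show ?thesis
    using sum_c pos unfolding cell_def by blast
qed

lemma simplicial_complex_simplex:
  assumes "simplicial_complex K" "S \<in> K"
  shows "finite S" "S \<noteq> {}" "\<not> affine_dependent S"
proof -
  have "simplex_vertices S" using assms by (simp add: simplicial_complex_def)
  thus "finite S" "S \<noteq> {}" "\<not> affine_dependent S" by (simp_all add: simplex_vertices_def)
qed

lemma cellsE:
  assumes "simplicial_complex K" "c \<in> cells K"
  obtains S where "S \<in> K" "c = cell S" "finite S" "S \<noteq> {}" "\<not> affine_dependent S"
proof -
  obtain S where "S \<in> K" "c = cell S" using assms(2) by (auto simp: cells_def)
  thus thesis using that simplicial_complex_simplex[OF assms(1)] by blast
qed

lemma cells_nonempty: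
  assumes "simplicial_complex K" "c \<in> cells K"
  shows "c \<noteq> {}"
proof -
  obtain S where "c = cell S" "finite S" "S \<noteq> {}"
    using assms cellsE by metis
  thus ?thesis using cell_nonempty by blast
qed

lemma cells_subset_polyhedron:
  assumes "simplicial_complex K" "c \<in> cells K"
  shows "c \<subseteq> polyhedron K"
proof -
  obtain S where "S \<in> K" "c = cell S" "finite S"
    using assms cellsE by metis
  thus ?thesis using cell_subset_convex_hull by (force simp: polyhedron_def)
qed

lemma simplicial_complex_meet:
  assumes "simplicial_complex K" "S \<in> K" "T \<in> K" "convex hull S \<inter> convex hull T \<noteq> {}"
  obtains U where "U \<subseteq> S" "U \<subseteq> T" "convex hull S \<inter> convex hull T = convex hull U"
proof -
  have "\<forall>S\<in>K. \<forall>T\<in>K. convex hull S \<inter> convex hull T = {} \<or>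
          (\<exists>U. U \<noteq> {} \<and> U \<subseteq> S \<and> U \<subseteq> T \<and> convex hull S \<inter> convex hull T = convex hull U)"
    using assms(1) unfolding simplicial_complex_def by (elim conjE)
  thus thesis using assms(2-4) that by blast
qed

lemma cells_meet_imp_eq:
  assumes K: "simplicial_complex K" and "S \<in> K" "T \<in> K" "x \<in> cell S" "x \<in> cell T"
  shows "S = T"
proof -
  note S = simplicial_complex_simplex[OF K \<open>S \<in> K\<close>]
  note T = simplicial_complex_simplex[OF K \<open>T \<in> K\<close>]
  have x: "x \<in> convex hull S \<inter> convex hull T"
    using cell_subset_convex_hull S(1) T(1) assms(4,5) by blast
  then obtain U where U: "U \<subseteq> S" "U \<subseteq> T" "convex hull S \<inter> convex hull T = convex hull U"
    using simplicial_complex_meet[OF K assms(2,3)] by blast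
  have "S \<subseteq> U" using cell_meets_convex_hull_imp_subset[OF S(1,3) assms(4) U(1)] x U(3) by blast
  moreover have "T \<subseteq> U" using cell_meets_convex_hull_imp_subset[OF T(1,3) assms(5) U(2)] x U(3) by blast
  ultimately show ?thesis using U by blast
qed

lemma cell_of_eqI:
  assumes K: "simplicial_complex K" and "c \<in> cells K" "x \<in> c"
  shows "cell_of K x = c"
  unfolding cell_of_def
proof (rule the_equality)
  fix d assume "d \<in> cells K \<and> x \<in> d"
  moreover obtain S where "S \<in> K" "c = cell S" using assms(2) by (auto simp: cells_def)
  ultimately show "d = c" using assms(3) cells_meet_imp_eq[OF K] by (auto simp: cells_def)
qed (use assms in blast)

lemma linepath_to_upper_cell:
  assumes "simplicial_complex K" "d \<in> cells K" "cell_le c d" "a \<in> c" "b \<in> d" "s \<in> {0<..1}"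
  shows "linepath a b s \<in> d"
proof -
  obtain S where S: "d = cell S" "finite S"
    using assms(1,2) cellsE by metis
  have "a \<in> convex hull S"
    using assms(3,4) closure_cell_subset_convex_hull[OF S(2)] S(1) by (auto simp: cell_le_def)
  thus ?thesis using linepath_convex_hull_to_cell[OF S(2) _ _ assms(6)] assms(5) S(1) by blast
qed

lemma down_path_segment_in_cell:
  assumes K: "simplicial_complex K" and \<pi>: "down_path K \<pi> l"
    and x: "\<And>i. i \<le> l \<Longrightarrow> x i \<in> \<pi> i" and "j < l" "t \<in> {0<..<1}"
  shows "\<exists>k<l. linepath (x j) (x (Suc j)) t \<in> \<pi> k"
proof -
  have cells: "\<pi> i \<in> cells K" if "i \<le> l" for i
    using \<pi> that by (simp add: down_path_def)
  have backward: "linepath (x j) (x (Suc j)) t \<in> \<pi> j" if "cell_le (\<pi> (Suc j)) (\<pi> j)"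
  proof -
    have "linepath (x (Suc j)) (x j) (1 - t) \<in> \<pi> j"
      using assms(4,5) by (intro linepath_to_upper_cell[OF K _ that]) (auto intro: cells x)
    thus ?thesis by (simp add: linepath_def add.commute)
  qed
  consider "cell_le (\<pi> j) (\<pi> (Suc j))" "Suc j < l" | "cell_le (\<pi> (Suc j)) (\<pi> j)"
    using \<pi> \<open>j < l\<close> unfolding down_path_def
    by (metis Suc_lessI diff_Suc_1)
  thus ?thesis
  proof cases
    case 1
    hence "linepath (x j) (x (Suc j)) t \<in> \<pi> (Suc j)"
      using assms(4,5) by (intro linepath_to_upper_cell[OF K _ 1(1)]) (auto intro: cells x)
    thus ?thesis using 1 by blast
  qed (use backward \<open>j < l\<close> in blast)
qed

lemma joinpaths_interior_cases [consumes 1, case_names first middle second]: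
  assumes "r \<in> {0<..<1}"
  obtains (first) s where "s \<in> {0<..<1}" "(p +++ q) r = p s"
    | (middle) "(p +++ q) r = p 1"
    | (second) s where "s \<in> {0<..<1}" "(p +++ q) r = q s"
proof -
  consider "r < 1/2" | "r = 1/2" | "r > 1/2" by linarith
  thus thesis
  proof cases
    case 1
    thus thesis using assms by (intro first[of "2 * r"]) (auto simp: joinpaths_def)
  next
    case 2
    thus thesis by (intro middle) (simp add: joinpaths_def 2)
  next
    case 3
    thus thesis using assms by (intro second[of "2 * r - 1"]) (auto simp: joinpaths_def)
  qed
qed

lemma polygonal_path:
  fixes x :: "nat \<Rightarrow> 'a::real_normed_vector"
  assumes "0 < n"
  shows "\<exists>g. path g \<and> g 0 = x 0 \<and> g 1 = x n \<and>
    (\<forall>r\<in>{0<..<1}. (\<exists>j\<in>{0<..<n}. g r = x j) \<or>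
                   (\<exists>j<n. \<exists>t\<in>{0<..<1}. g r = linepath (x j) (x (Suc j)) t))"
  using assms
proof (induction n arbitrary: x rule: nat_induct_non_zero)
  case 1
  show ?case
    by (intro exI[of _ "linepath (x 0) (x 1)"]) (auto simp: linepath_0' linepath_1')
next
  case (Suc n)
  obtain g where g: "path g" "g 0 = x 1" "g 1 = x (Suc n)"
    and interior: "\<forall>r\<in>{0<..<1}. (\<exists>j\<in>{0<..<n}. g r = x (Suc j)) \<or>
                   (\<exists>j<n. \<exists>t\<in>{0<..<1}. g r = linepath (x (Suc j)) (x (Suc (Suc j))) t)"
    using Suc.IH[of "\<lambda>k. x (Suc k)"] by auto
  let ?h = "linepath (x 0) (x 1) +++ g"
  have "(\<exists>j\<in>{0<..<Suc n}. ?h r = x j) \<or>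
        (\<exists>j<Suc n. \<exists>t\<in>{0<..<1}. ?h r = linepath (x j) (x (Suc j)) t)"
    if "r \<in> {0<..<1}" for r
    using that
  proof (cases rule: joinpaths_interior_cases[where p = "linepath (x 0) (x 1)" and q = g])
    case (first s)
    thus ?thesis by (intro disjI2 exI[of _ 0]) auto
  next
    case middle
    thus ?thesis using \<open>0 < n\<close> by (auto simp: linepath_1')
  next
    case (second s)
    thus ?thesis
      using interior[rule_format, of s] by (metis Suc_mono greaterThanLessThan_iff zero_less_Suc)
  qed
  moreover have "path ?h" using g by (auto intro: path_join_imp simp: pathstart_def)
  ultimately show ?case
    using g by (intro exI[of _ ?h]) (auto simp: joinpaths_def linepath_0')
qed

lemma down_path_polygonal_path:
  assumes K: "simplicial_complex K" and \<pi>: "down_path K \<pi> l"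
    and x: "\<And>i. i \<le> l \<Longrightarrow> x i \<in> \<pi> i"
  obtains g where "path g" "g 0 = x 0" "g 1 = x l" "\<And>r. r \<in> {0<..<1} \<Longrightarrow> \<exists>i<l. g r \<in> \<pi> i"
proof -
  have "0 < l" using \<pi> by (simp add: down_path_def)
  then obtain g where g: "path g" "g 0 = x 0" "g 1 = x l"
    and interior: "\<forall>r\<in>{0<..<1}. (\<exists>j\<in>{0<..<l}. g r = x j) \<or>
                   (\<exists>j<l. \<exists>t\<in>{0<..<1}. g r = linepath (x j) (x (Suc j)) t)"
    using polygonal_path[of l x] by blast
  have "\<exists>i<l. g r \<in> \<pi> i" if r: "r \<in> {0<..<1}" for r
  proof -
    consider (vertex) j where "j \<in> {0<..<l}" "g r = x j"
      | (segment) j t where "j < l" "t \<in> {0<..<1}" "g r = linepath (x j) (x (Suc j)) t"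
      using interior r by blast
    thus ?thesis
    proof cases
      case vertex
      thus ?thesis using x[of j] by auto
    next
      case segment
      thus ?thesis using down_path_segment_in_cell[OF K \<pi> x] by metis
    qed
  qed
  thus thesis using that g by blast
qed

theorem lemma10:
  fixes K :: "'a::euclidean_space set set" and V :: "'p \<Rightarrow> 'a set"
    and \<pi> :: "nat \<Rightarrow> 'a set" and l :: nat
  assumes "polyhedral_model K V"
    and "down_path K \<pi> l"
  shows "\<exists>p :: real \<Rightarrow> 'a. path p \<and> path_image p \<subseteq> polyhedron K \<and>
           cell_of K (p 0) = \<pi> 0 \<and> cell_of K (p 1) = \<pi> l \<and>
           (\<forall>r\<in>{0<..<1}. \<exists>i<l. cell_of K (p r) = \<pi> i)"
proof -
  have K: "simplicial_complex K" using assms(1) by (simp add: polyhedral_model_def)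
  have cells: "\<pi> i \<in> cells K" if "i \<le> l" for i
    using assms(2) that by (simp add: down_path_def)
  have "\<forall>i. \<exists>y. i \<le> l \<longrightarrow> y \<in> \<pi> i" using cells_nonempty[OF K cells] by blast
  then obtain x where x: "\<And>i. i \<le> l \<Longrightarrow> x i \<in> \<pi> i" by metis
  obtain g where g: "path g" "g 0 = x 0" "g 1 = x l"
    and inner: "\<And>r. r \<in> {0<..<1} \<Longrightarrow> \<exists>i<l. g r \<in> \<pi> i"
    using down_path_polygonal_path[OF K assms(2) x] by blast
  have "\<exists>i\<le>l. g r \<in> \<pi> i" if "r \<in> {0..1}" for r
    using that inner[of r] g(2,3) x[of 0] x[of l]
    by (cases "r = 0 \<or> r = 1") (auto intro: less_imp_le)
  hence "path_image g \<subseteq> polyhedron K"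
    using cells_subset_polyhedron[OF K cells] unfolding path_image_def by blast
  moreover have cell_of_\<pi>: "cell_of K y = \<pi> i" if "i \<le> l" "y \<in> \<pi> i" for y i
    using cell_of_eqI[OF K cells] that by blast
  moreover have "\<exists>i<l. cell_of K (g r) = \<pi> i" if "r \<in> {0<..<1}" for r
    using inner[OF that] cell_of_\<pi> by (meson less_imp_le)
  ultimately show ?thesis
    using g x[of 0] x[of l] cell_of_\<pi>[of 0] cell_of_\<pi>[of l] by (intro exI[of _ g]) simp
qed

end
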